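(* Let $W$ be a Coxeter group and $u\le v$ in $W$. If $s \in D_L(v)\setminus D_L(u)$, then the left multiplication map $x\mapsto sx$ maps $[u,v]$ to itself and restricts to a graph automorphism of $\Gamma(u,v)$. Similarly, if $s\in D_R(v)\setminus D_R(u)$, then right multiplication $x\mapsto xs$ restricts to a graph automorphism of $\Gamma(u,v)$.
   Context: $(W,S)$ is a Coxeter system with reflections $T$ (conjugates of $S$), length $\ell$ and Bruhat order $\le$ (transitive closure of $x<xt$, $t\in T$, $\ell(xt)>\ell(x)$). $D_L(w)=\{s\in S:\ell(sw)<\ell(w)\}$ and $D_R(w)=\{s\in S:\ell(ws)<\ell(w)\}$. $\Gamma(u,v)$ is the simple undirected graph on $[u,v]=\{x:u\le x\le v\}$ with edges $\{x,y\}$ whenever $y=xt$ for some $t\in T$. *)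

theory Defs
  imports "HOL-Algebra.Group"
begin

definition word_prod :: "('a, 'b) monoid_scheme \<Rightarrow> 'a list \<Rightarrow> 'a" where
  "word_prod G ws = foldr (\<lambda>a b. a \<otimes>\<^bsub>G\<^esub> b) ws \<one>\<^bsub>G\<^esub>"

(* Coxeter matrix on S: m s s = 1, symmetric, m s t \<noteq> 1 for s \<noteq> t;
   the value 0 encodes m(s,t) = \<infinity> (no relation). *)
definition coxeter_matrix :: "'a set \<Rightarrow> ('a \<Rightarrow> 'a \<Rightarrow> nat) \<Rightarrow> bool" where
  "coxeter_matrix S m \<longleftrightarrow>
     (\<forall>s\<in>S. m s s = 1) \<and> (\<forall>s\<in>S. \<forall>t\<in>S. m s t = m t s) \<and>
     (\<forall>s\<in>S. \<forall>t\<in>S. s \<noteq> t \<longrightarrow> m s t \<noteq> 1)"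

definition rel_word :: "'a \<Rightarrow> 'a \<Rightarrow> nat \<Rightarrow> 'a list" where
  "rel_word s t k = concat (replicate k [s, t])"

inductive cox_equiv :: "'a set \<Rightarrow> ('a \<Rightarrow> 'a \<Rightarrow> nat) \<Rightarrow> 'a list \<Rightarrow> 'a list \<Rightarrow> bool"
  for S m where
  refl: "cox_equiv S m w w"
| sym: "cox_equiv S m w w' \<Longrightarrow> cox_equiv S m w' w"
| trans: "cox_equiv S m w1 w2 \<Longrightarrow> cox_equiv S m w2 w3 \<Longrightarrow> cox_equiv S m w1 w3"
| rel: "s \<in> S \<Longrightarrow> t \<in> S \<Longrightarrow> m s t > 0 \<Longrightarrow> set xs \<subseteq> S \<Longrightarrow> set ys \<subseteq> S \<Longrightarrow>
        cox_equiv S m (xs @ rel_word s t (m s t) @ ys) (xs @ ys)"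

(* (G,S) is a Coxeter system: G is a group generated by the set S of involutions
   and has the presentation < S | (st)^{m(s,t)} = 1 > for a Coxeter matrix m,
   i.e. a word over S evaluates to 1 iff it is equivalent to the empty word
   modulo the defining relations. *)
definition coxeter_system :: "('a, 'b) monoid_scheme \<Rightarrow> 'a set \<Rightarrow> bool" where
  "coxeter_system G S \<longleftrightarrow> group G \<and> S \<subseteq> carrier G \<and>
     (\<forall>g\<in>carrier G. \<exists>ws. set ws \<subseteq> S \<and> word_prod G ws = g) \<and>
     (\<exists>m. coxeter_matrix S m \<and>
        (\<forall>s\<in>S. \<forall>t\<in>S. m s t > 0 \<longrightarrow> (s \<otimes>\<^bsub>G\<^esub> t) [^]\<^bsub>G\<^esub> (m s t) = \<one>\<^bsub>G\<^esub>) \<and>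
        (\<forall>ws. set ws \<subseteq> S \<longrightarrow> word_prod G ws = \<one>\<^bsub>G\<^esub> \<longrightarrow> cox_equiv S m ws []))"

definition cox_length :: "('a, 'b) monoid_scheme \<Rightarrow> 'a set \<Rightarrow> 'a \<Rightarrow> nat" where
  "cox_length G S w = (LEAST n. \<exists>ws. length ws = n \<and> set ws \<subseteq> S \<and> word_prod G ws = w)"

definition reflections :: "('a, 'b) monoid_scheme \<Rightarrow> 'a set \<Rightarrow> 'a set" where
  "reflections G S = {g \<otimes>\<^bsub>G\<^esub> s \<otimes>\<^bsub>G\<^esub> inv\<^bsub>G\<^esub> g | g s. g \<in> carrier G \<and> s \<in> S}"

definition bruhat_step :: "('a, 'b) monoid_scheme \<Rightarrow> 'a set \<Rightarrow> 'a \<Rightarrow> 'a \<Rightarrow> bool" where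
  "bruhat_step G S x y \<longleftrightarrow> x \<in> carrier G \<and>
     (\<exists>t\<in>reflections G S. y = x \<otimes>\<^bsub>G\<^esub> t \<and> cox_length G S y > cox_length G S x)"

definition bruhat_le :: "('a, 'b) monoid_scheme \<Rightarrow> 'a set \<Rightarrow> 'a \<Rightarrow> 'a \<Rightarrow> bool" where
  "bruhat_le G S x y \<longleftrightarrow> x \<in> carrier G \<and> (bruhat_step G S)\<^sup>*\<^sup>* x y"

definition bruhat_interval :: "('a, 'b) monoid_scheme \<Rightarrow> 'a set \<Rightarrow> 'a \<Rightarrow> 'a \<Rightarrow> 'a set" where
  "bruhat_interval G S u v = {x. bruhat_le G S u x \<and> bruhat_le G S x v}"

definition left_descents :: "('a, 'b) monoid_scheme \<Rightarrow> 'a set \<Rightarrow> 'a \<Rightarrow> 'a set" where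
  "left_descents G S w = {s\<in>S. cox_length G S (s \<otimes>\<^bsub>G\<^esub> w) < cox_length G S w}"

definition right_descents :: "('a, 'b) monoid_scheme \<Rightarrow> 'a set \<Rightarrow> 'a \<Rightarrow> 'a set" where
  "right_descents G S w = {s\<in>S. cox_length G S (w \<otimes>\<^bsub>G\<^esub> s) < cox_length G S w}"

definition gamma_edge :: "('a, 'b) monoid_scheme \<Rightarrow> 'a set \<Rightarrow> 'a \<Rightarrow> 'a \<Rightarrow> 'a \<Rightarrow> 'a \<Rightarrow> bool" where
  "gamma_edge G S u v x y \<longleftrightarrow> x \<in> bruhat_interval G S u v \<and> y \<in> bruhat_interval G S u v \<and>
     x \<noteq> y \<and> (\<exists>t\<in>reflections G S. y = x \<otimes>\<^bsub>G\<^esub> t)"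

definition gamma_automorphism :: "('a, 'b) monoid_scheme \<Rightarrow> 'a set \<Rightarrow> 'a \<Rightarrow> 'a \<Rightarrow> ('a \<Rightarrow> 'a) \<Rightarrow> bool" where
  "gamma_automorphism G S u v f \<longleftrightarrow>
     bij_betw f (bruhat_interval G S u v) (bruhat_interval G S u v) \<and>
     (\<forall>x\<in>bruhat_interval G S u v. \<forall>y\<in>bruhat_interval G S u v.
        gamma_edge G S u v (f x) (f y) \<longleftrightarrow> gamma_edge G S u v x y)"

end

theory Submission
  imports Defs
begin

(* Left multiplication by s \<in> S pairs every x with s x, and the two are comparable in the
   Bruhat order. The lifting property says that x \<preceq> y implies min(x, s x) \<preceq> min(y, s y) and
   max(x, s x) \<preceq> max(y, s y). It reduces to a single Bruhat step y = x t, where the strong exchange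
   condition shows s x \<preceq> s y unless s x = y. When s is a left descent of v but not of u, this keeps
   s x inside [u, v]; and since s (x t) = (s x) t, left multiplication by s preserves the edges of
   \<Gamma>(u, v). Inversion preserves the Bruhat order and exchanges left and right descents, which
   gives the right-handed statement, with x t s = (x s)(s t s) for the edges.

   The strong exchange condition comes from counting how often a reflection r occurs among the
   reflections of a word: the parity of this count depends only on the group element, because every
   Coxeter relator (s t)^m(s,t) contains each reflection an even number of times. *)

section \<open>Reflection counts of words\<close>

(* For a word c_1 ... c_n this counts the positions i with
   (c_1 ... c_(i-1)) c_i (c_1 ... c_(i-1))^-1 = r; its parity is the reflection cocycle of
   Humphreys, Reflection Groups and Coxeter Groups, 5.6. *)
fun refl_count :: "('a, 'b) monoid_scheme \<Rightarrow> 'a list \<Rightarrow> 'a \<Rightarrow> nat" where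
  "refl_count G [] r = 0"
| "refl_count G (c # w) r =
     (if c = r then 1 else 0) + refl_count G w (inv\<^bsub>G\<^esub> c \<otimes>\<^bsub>G\<^esub> r \<otimes>\<^bsub>G\<^esub> c)"

context monoid
begin

lemma word_prod_Nil [simp]: "word_prod G [] = \<one>"
  and word_prod_Cons [simp]: "word_prod G (c # w) = c \<otimes> word_prod G w"
  by (simp_all add: word_prod_def)

lemma word_prod_closed [simp]: "set w \<subseteq> carrier G \<Longrightarrow> word_prod G w \<in> carrier G"
  by (induction w) auto

lemma word_prod_append:
  "set v \<subseteq> carrier G \<Longrightarrow> set w \<subseteq> carrier G \<Longrightarrow>
   word_prod G (v @ w) = word_prod G v \<otimes> word_prod G w"
  by (induction v) (auto simp: m_assoc)

lemma mult_nat_pow_swap: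
  "a \<in> carrier G \<Longrightarrow> b \<in> carrier G \<Longrightarrow> a \<otimes> (b \<otimes> a) [^] (j::nat) = (a \<otimes> b) [^] j \<otimes> a"
  by (induction j) (simp_all add: m_assoc[symmetric])

end

lemma rel_word_Suc: "rel_word s t (Suc j) = rel_word s t j @ [s, t]"
  by (simp add: rel_word_def replicate_append_same[symmetric])

lemma set_rel_word: "s \<in> A \<Longrightarrow> t \<in> A \<Longrightarrow> set (rel_word s t j) \<subseteq> A"
  by (induction j) (auto simp: rel_word_def)

context group
begin

lemma inv_mult_cancel_left [simp]: "x \<in> carrier G \<Longrightarrow> y \<in> carrier G \<Longrightarrow> inv x \<otimes> (x \<otimes> y) = y"
  and mult_inv_cancel_left [simp]: "x \<in> carrier G \<Longrightarrow> y \<in> carrier G \<Longrightarrow> x \<otimes> (inv x \<otimes> y) = y"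
  by (simp_all add: m_assoc[symmetric])

lemma conj_eq_iff:
  "a \<in> carrier G \<Longrightarrow> r \<in> carrier G \<Longrightarrow> x \<in> carrier G \<Longrightarrow>
   a = inv x \<otimes> r \<otimes> x \<longleftrightarrow> x \<otimes> a \<otimes> inv x = r"
  by (metis inv_closed inv_inv inv_solve_left inv_solve_right m_assoc m_closed)

lemma refl_count_append:
  assumes "set v \<subseteq> carrier G" "set w \<subseteq> carrier G" "r \<in> carrier G"
  shows "refl_count G (v @ w) r =
    refl_count G v r + refl_count G w (inv (word_prod G v) \<otimes> r \<otimes> word_prod G v)"
  using assms
proof (induction v arbitrary: r)
  case (Cons c v)
  have "inv (word_prod G v) \<otimes> (inv c \<otimes> r \<otimes> c) \<otimes> word_prod G v
      = inv (c \<otimes> word_prod G v) \<otimes> r \<otimes> (c \<otimes> word_prod G v)"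
    using Cons.prems by (simp add: inv_mult_group m_assoc)
  with Cons show ?case by simp
qed simp

lemma refl_count_pos_deletion:
  assumes "set w \<subseteq> carrier G" "r \<in> carrier G" "r \<otimes> r = \<one>" "refl_count G w r > 0"
  shows "\<exists>xs c ys. w = xs @ c # ys \<and> r \<otimes> word_prod G w = word_prod G (xs @ ys)"
  using assms
proof (induction w arbitrary: r)
  case (Cons c w)
  have c: "c \<in> carrier G" and w: "set w \<subseteq> carrier G" using Cons.prems by auto
  show ?case
  proof (cases "c = r")
    case True
    then have "r \<otimes> word_prod G (c # w) = word_prod G w"
      using Cons.prems c w by (simp add: m_assoc[symmetric])
    then show ?thesis by (intro exI[of _ "[]"]) auto
  next
    case False
    let ?r = "inv c \<otimes> r \<otimes> c"
    have "?r \<otimes> ?r = \<one>"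
      using Cons.prems c by (simp add: m_assoc) (simp add: m_assoc[symmetric])
    moreover have "refl_count G w ?r > 0" using Cons.prems False by simp
    ultimately obtain xs d ys
      where "w = xs @ d # ys" and "?r \<otimes> word_prod G w = word_prod G (xs @ ys)"
      using Cons.IH[OF w] Cons.prems c by blast
    moreover have "r \<otimes> word_prod G (c # w) = c \<otimes> (?r \<otimes> word_prod G w)"
      using c w Cons.prems by (simp add: m_assoc[symmetric])
    ultimately show ?thesis by (intro exI[of _ "c # xs"]) auto
  qed
qed simp

lemma word_prod_rel_word:
  "s \<in> carrier G \<Longrightarrow> t \<in> carrier G \<Longrightarrow> word_prod G (rel_word s t j) = (s \<otimes> t) [^] j"
proof (induction j)
  case (Suc j)
  have "set (rel_word s t j) \<subseteq> carrier G" using set_rel_word Suc.prems .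
  with Suc show ?case by (simp add: rel_word_Suc word_prod_append m_assoc)
qed (simp add: rel_word_def)

lemma refl_count_rel_word:
  assumes s: "s \<in> carrier G" "s \<otimes> s = \<one>" and t: "t \<in> carrier G" "t \<otimes> t = \<one>"
    and r: "r \<in> carrier G"
  shows "refl_count G (rel_word s t j) r = (\<Sum>i<2*j. if (s \<otimes> t) [^] i \<otimes> s = r then 1 else 0)"
proof (induction j)
  case (Suc j)
  let ?x = "(s \<otimes> t) [^] j"
  have inv_s: "inv s = s" and inv_t: "inv t = t" using s t inv_equality by auto
  have "inv ?x = (t \<otimes> s) [^] j"
    using s t by (simp add: nat_pow_inv[symmetric] inv_mult_group inv_s inv_t)
  then have swap: "s \<otimes> inv ?x = ?x \<otimes> s"
    using mult_nat_pow_swap[OF s(1) t(1)] by simp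
  have pow_add: "(s \<otimes> t) [^] i \<otimes> (s \<otimes> t) [^] k = (s \<otimes> t) [^] (i + k)" for i k :: nat
    using s t by (simp add: nat_pow_mult)
  have x_s: "?x \<otimes> s \<otimes> inv ?x = (s \<otimes> t) [^] (2 * j) \<otimes> s"
    using s t swap by (simp add: m_assoc pow_add[symmetric] mult_2)
  have x_sts: "(?x \<otimes> s) \<otimes> t \<otimes> inv (?x \<otimes> s) = (s \<otimes> t) [^] Suc (2 * j) \<otimes> s"
  proof -
    have "(?x \<otimes> s) \<otimes> t \<otimes> inv (?x \<otimes> s) = ?x \<otimes> (s \<otimes> t) \<otimes> (s \<otimes> inv ?x)"
      using s t by (simp add: inv_mult_group inv_s m_assoc)
    also have "\<dots> = ?x \<otimes> (s \<otimes> t) \<otimes> ?x \<otimes> s"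
      using s t swap by (simp add: m_assoc)
    also have "?x \<otimes> (s \<otimes> t) \<otimes> ?x = (s \<otimes> t) [^] (Suc j + j)"
      using s t pow_add[of "Suc j" j] by simp
    finally show ?thesis by (simp add: mult_2)
  qed
  have word: "set (rel_word s t j) \<subseteq> carrier G" using set_rel_word s(1) t(1) .
  have "refl_count G [s, t] (inv ?x \<otimes> r \<otimes> ?x) =
      (if (s \<otimes> t) [^] (2 * j) \<otimes> s = r then 1 else 0)
    + (if (s \<otimes> t) [^] Suc (2 * j) \<otimes> s = r then 1 else 0)"
  proof -
    have "inv s \<otimes> (inv ?x \<otimes> r \<otimes> ?x) \<otimes> s = inv (?x \<otimes> s) \<otimes> r \<otimes> (?x \<otimes> s)"
      using s t r by (simp add: inv_mult_group m_assoc)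
    then show ?thesis
      using conj_eq_iff[of s r ?x] conj_eq_iff[of t r "?x \<otimes> s"] s t r x_s x_sts by simp
  qed
  then show ?case
    using Suc refl_count_append[OF word _ r, of "[s, t]"] s t
    by (simp add: rel_word_Suc word_prod_rel_word)
qed (simp add: rel_word_def)

lemma even_refl_count_relator:
  assumes "s \<in> carrier G" "s \<otimes> s = \<one>" "t \<in> carrier G" "t \<otimes> t = \<one>" "r \<in> carrier G"
    and period: "(s \<otimes> t) [^] k = \<one>"
  shows "even (refl_count G (rel_word s t k) r)"
proof -
  let ?f = "\<lambda>i::nat. if (s \<otimes> t) [^] i \<otimes> s = r then 1 else (0::nat)"
  have "?f (i + k) = ?f i" for i
    using assms by (simp add: nat_pow_mult[symmetric])
  then have "(\<Sum>i<k+k. ?f i) = 2 * (\<Sum>i<k. ?f i)"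
    using sum.shift_bounds_nat_ivl[of ?f 0 k k] sum.atLeastLessThan_concat[of 0 k "k+k" ?f]
    by (simp add: lessThan_atLeast0)
  then show ?thesis
    using refl_count_rel_word[OF assms(1-5)] by (simp add: mult_2)
qed

end

section \<open>The strong exchange condition\<close>

locale coxeter =
  fixes G :: "('a, 'b) monoid_scheme" (structure) and S :: "'a set"
  assumes coxeter_system: "coxeter_system G S"

sublocale coxeter \<subseteq> group G
  using coxeter_system by (simp add: coxeter_system_def)

context coxeter
begin

abbreviation len :: "'a \<Rightarrow> nat" where "len \<equiv> cox_length G S"
abbreviation T :: "'a set" where "T \<equiv> reflections G S"
abbreviation bruhat (infix "\<preceq>" 50) where "x \<preceq> y \<equiv> bruhat_le G S x y"
abbreviation step where "step \<equiv> bruhat_step G S"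

lemma generators_closed: "S \<subseteq> carrier G"
  using coxeter_system by (simp add: coxeter_system_def)

lemma generator_closed [simp]: "s \<in> S \<Longrightarrow> s \<in> carrier G"
  using generators_closed by blast

lemma words_generate: "g \<in> carrier G \<Longrightarrow> \<exists>w. set w \<subseteq> S \<and> word_prod G w = g"
  using coxeter_system by (simp add: coxeter_system_def)

lemma word_prod_closed_generators [simp]: "set w \<subseteq> S \<Longrightarrow> word_prod G w \<in> carrier G"
  using generators_closed by auto

lemma word_prod_append_generators:
  "set v \<subseteq> S \<Longrightarrow> set w \<subseteq> S \<Longrightarrow> word_prod G (v @ w) = word_prod G v \<otimes> word_prod G w"
  using generators_closed by (simp add: word_prod_append subset_trans)

lemma generator_square [simp]: "s \<in> S \<Longrightarrow> s \<otimes> s = \<one>"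
proof -
  assume s: "s \<in> S"
  obtain m where "coxeter_matrix S m"
    and "\<forall>s\<in>S. \<forall>t\<in>S. m s t > 0 \<longrightarrow> (s \<otimes> t) [^] m s t = \<one>"
    using coxeter_system unfolding coxeter_system_def by blast
  with s show ?thesis by (force simp: coxeter_matrix_def)
qed

lemma generator_inv [simp]: "s \<in> S \<Longrightarrow> inv s = s"
  using inv_equality by simp

lemma generator_cancel_left [simp]: "s \<in> S \<Longrightarrow> g \<in> carrier G \<Longrightarrow> s \<otimes> (s \<otimes> g) = g"
  by (simp add: m_assoc[symmetric])

lemma generator_cancel_right [simp]: "s \<in> S \<Longrightarrow> g \<in> carrier G \<Longrightarrow> g \<otimes> s \<otimes> s = g"
  by (simp add: m_assoc)

lemma word_prod_rev: "set w \<subseteq> S \<Longrightarrow> word_prod G (rev w) = inv (word_prod G w)"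
  by (induction w) (simp_all add: word_prod_append_generators inv_mult_group)

lemma reflection_closed [simp]: "r \<in> T \<Longrightarrow> r \<in> carrier G"
  unfolding reflections_def by auto

lemma generator_reflection: "s \<in> S \<Longrightarrow> s \<in> T"
  unfolding reflections_def by (force intro: exI[of _ \<one>])

lemma reflection_conj: "r \<in> T \<Longrightarrow> g \<in> carrier G \<Longrightarrow> g \<otimes> r \<otimes> inv g \<in> T"
proof -
  assume "r \<in> T" and g: "g \<in> carrier G"
  then obtain h s where hs: "h \<in> carrier G" "s \<in> S" "r = h \<otimes> s \<otimes> inv h"
    unfolding reflections_def by auto
  then have "g \<otimes> r \<otimes> inv g = (g \<otimes> h) \<otimes> s \<otimes> inv (g \<otimes> h)"
    using g by (simp add: m_assoc inv_mult_group)
  then show ?thesis unfolding reflections_def using hs g by blast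
qed

lemma reflection_square [simp]: "r \<in> T \<Longrightarrow> r \<otimes> r = \<one>"
proof -
  assume "r \<in> T"
  then obtain h s where hs: "h \<in> carrier G" "s \<in> S" "r = h \<otimes> s \<otimes> inv h"
    unfolding reflections_def by auto
  then have "r \<otimes> r = h \<otimes> (s \<otimes> s) \<otimes> inv h" by (simp add: m_assoc)
  with hs show ?thesis by simp
qed

lemma reflection_inv [simp]: "r \<in> T \<Longrightarrow> inv r = r"
  using inv_equality by simp

lemma refl_count_parity_cox_equiv:
  assumes rels: "\<forall>s\<in>S. \<forall>t\<in>S. m s t > 0 \<longrightarrow> (s \<otimes> t) [^] m s t = \<one>"
    and "cox_equiv S m w w'" and r: "r \<in> carrier G"
  shows "even (refl_count G w r) = even (refl_count G w' r)"
  using assms(2)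
proof (induction rule: cox_equiv.induct)
  case (rel s t xs ys)
  let ?R = "rel_word s t (m s t)" and ?r = "inv (word_prod G xs) \<otimes> r \<otimes> word_prod G xs"
  have R: "set ?R \<subseteq> carrier G" "word_prod G ?R = \<one>"
    using set_rel_word[of s "carrier G" t] rel rels by (auto simp: word_prod_rel_word)
  have "even (refl_count G ?R ?r)"
    using rel rels r by (intro even_refl_count_relator) auto
  moreover have "set xs \<subseteq> carrier G" "set ys \<subseteq> carrier G"
    using rel generators_closed by auto
  ultimately show ?case
    using R r refl_count_append[of xs "?R @ ys" r] refl_count_append[of ?R ys ?r]
      refl_count_append[of xs ys r]
    by simp
qed auto

lemma refl_count_parity_eq:
  assumes v: "set v \<subseteq> S" and w: "set w \<subseteq> S" and eq: "word_prod G v = word_prod G w"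
    and r: "r \<in> carrier G"
  shows "even (refl_count G v r) = even (refl_count G w r)"
proof -
  obtain m where rels: "\<forall>s\<in>S. \<forall>t\<in>S. m s t > 0 \<longrightarrow> (s \<otimes> t) [^] m s t = \<one>"
    and pres: "\<forall>ws. set ws \<subseteq> S \<longrightarrow> word_prod G ws = \<one> \<longrightarrow> cox_equiv S m ws []"
    using coxeter_system unfolding coxeter_system_def by blast
  have even_cancel: "even (refl_count G (u @ rev w) r)"
    if u: "set u \<subseteq> S" "word_prod G u = word_prod G w" for u
  proof -
    have "word_prod G (u @ rev w) = \<one>"
      using u w by (simp add: word_prod_append_generators word_prod_rev)
    then have "cox_equiv S m (u @ rev w) []" using pres u w by simp
    then show ?thesis using refl_count_parity_cox_equiv[OF rels _ r] by fastforce
  qed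
  have "set v \<subseteq> carrier G" "set w \<subseteq> carrier G" "set (rev w) \<subseteq> carrier G"
    using v w generators_closed by auto
  then show ?thesis
    using even_cancel[OF v eq] even_cancel[OF w HOL.refl] eq r
      refl_count_append[of v "rev w" r] refl_count_append[of w "rev w" r]
    by simp
qed

definition refl_parity :: "'a \<Rightarrow> 'a \<Rightarrow> bool" where
  "refl_parity g r = odd (refl_count G (SOME w. set w \<subseteq> S \<and> word_prod G w = g) r)"

lemma refl_parity_word:
  assumes "set w \<subseteq> S" "r \<in> carrier G"
  shows "refl_parity (word_prod G w) r = odd (refl_count G w r)"
proof -
  let ?v = "SOME v. set v \<subseteq> S \<and> word_prod G v = word_prod G w"
  have "set ?v \<subseteq> S \<and> word_prod G ?v = word_prod G w"
    by (rule someI[of _ w]) (use assms in simp)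
  then show ?thesis
    unfolding refl_parity_def using refl_count_parity_eq assms by blast
qed

lemma refl_parity_mult:
  assumes g: "g \<in> carrier G" and h: "h \<in> carrier G" and r: "r \<in> carrier G"
  shows "refl_parity (g \<otimes> h) r = (refl_parity g r \<noteq> refl_parity h (inv g \<otimes> r \<otimes> g))"
proof -
  obtain v w where v: "set v \<subseteq> S" "word_prod G v = g" and w: "set w \<subseteq> S" "word_prod G w = h"
    using words_generate g h by meson
  have "set v \<subseteq> carrier G" "set w \<subseteq> carrier G" using v w generators_closed by auto
  then show ?thesis
    using refl_parity_word[of "v @ w" r] refl_parity_word[OF v(1) r]
      refl_parity_word[OF w(1), of "inv g \<otimes> r \<otimes> g"] refl_count_append[of v w r] v w g r
    by (simp add: word_prod_append)
qed

lemma refl_parity_one: "r \<in> carrier G \<Longrightarrow> \<not> refl_parity \<one> r"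
  using refl_parity_word[of "[]" r] by simp

lemma refl_parity_generator: "s \<in> S \<Longrightarrow> refl_parity s s"
  using refl_parity_word[of "[s]" s] by simp

lemma refl_parity_reflection: "r \<in> T \<Longrightarrow> refl_parity r r"
proof -
  assume "r \<in> T"
  then obtain g s where g: "g \<in> carrier G" and s: "s \<in> S" and r: "r = g \<otimes> s \<otimes> inv g"
    unfolding reflections_def by auto
  have conj: "inv g \<otimes> r \<otimes> g = s" using g s r by (simp add: m_assoc)
  have "\<not> refl_parity (g \<otimes> inv g) r" using refl_parity_one g s r by simp
  then have "refl_parity (inv g) s = refl_parity g r"
    using refl_parity_mult[of g "inv g" r] g s r conj by simp
  moreover have "r = g \<otimes> (s \<otimes> inv g)" using g s r by (simp add: m_assoc)
  ultimately show ?thesis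
    using refl_parity_mult[of g "s \<otimes> inv g" r] refl_parity_mult[of s "inv g" s]
      refl_parity_generator g s r conj by simp
qed

lemma refl_parity_reflection_mult:
  "r \<in> T \<Longrightarrow> g \<in> carrier G \<Longrightarrow> refl_parity (r \<otimes> g) r \<longleftrightarrow> \<not> refl_parity g r"
  using refl_parity_mult[of r g r] refl_parity_reflection by (simp add: m_assoc)

lemma len_word_le: "set w \<subseteq> S \<Longrightarrow> len (word_prod G w) \<le> length w"
  unfolding cox_length_def by (rule Least_le) auto

lemma reduced_word:
  assumes "g \<in> carrier G"
  obtains w where "set w \<subseteq> S" "word_prod G w = g" "length w = len g"
proof -
  have "\<exists>n w. length w = n \<and> set w \<subseteq> S \<and> word_prod G w = g"
    using words_generate[OF assms] by blast
  from LeastI_ex[OF this] show thesis using that unfolding cox_length_def by blast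
qed

lemma len_inv_le: "g \<in> carrier G \<Longrightarrow> len (inv g) \<le> len g"
proof -
  assume "g \<in> carrier G"
  then obtain w where "set w \<subseteq> S" "word_prod G w = g" "length w = len g"
    using reduced_word by blast
  then show ?thesis using len_word_le[of "rev w"] word_prod_rev by simp
qed

lemma len_inv [simp]: "g \<in> carrier G \<Longrightarrow> len (inv g) = len g"
  using len_inv_le[of g] len_inv_le[of "inv g"] by simp

lemma len_generator_mult_le: "s \<in> S \<Longrightarrow> g \<in> carrier G \<Longrightarrow> len (s \<otimes> g) \<le> len g + 1"
proof -
  assume s: "s \<in> S" and "g \<in> carrier G"
  then obtain w where "set w \<subseteq> S" "word_prod G w = g" "length w = len g"
    using reduced_word by blast
  then show ?thesis using len_word_le[of "s # w"] s by simp
qed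

lemma refl_parity_imp_len_less:
  assumes r: "r \<in> T" and g: "g \<in> carrier G" and parity: "refl_parity g r"
  shows "len (r \<otimes> g) < len g"
proof -
  obtain w where w: "set w \<subseteq> S" "word_prod G w = g" "length w = len g"
    using reduced_word g by blast
  have "odd (refl_count G w r)" using parity refl_parity_word[of w r] w r by simp
  then have "refl_count G w r > 0" by (rule odd_pos)
  moreover have "set w \<subseteq> carrier G" using w generators_closed by auto
  ultimately obtain xs c ys where "w = xs @ c # ys" "r \<otimes> g = word_prod G (xs @ ys)"
    using refl_count_pos_deletion[of w r] r w(2) by auto
  then show ?thesis
    using len_word_le[of "xs @ ys"] w by auto
qed

lemma len_less_iff_refl_parity:
  assumes r: "r \<in> T" and g: "g \<in> carrier G"
  shows "len (r \<otimes> g) < len g \<longleftrightarrow> refl_parity g r"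
proof
  assume less: "len (r \<otimes> g) < len g"
  show "refl_parity g r"
  proof (rule ccontr)
    assume "\<not> refl_parity g r"
    then have "len (r \<otimes> (r \<otimes> g)) < len (r \<otimes> g)"
      using refl_parity_imp_len_less refl_parity_reflection_mult r g by simp
    with less show False using r g by (simp add: m_assoc[symmetric])
  qed
qed (use refl_parity_imp_len_less assms in blast)

lemma len_less_reflection_mult_iff:
  "r \<in> T \<Longrightarrow> g \<in> carrier G \<Longrightarrow> len g < len (r \<otimes> g) \<longleftrightarrow> \<not> len (r \<otimes> g) < len g"
  using len_less_iff_refl_parity[of r "r \<otimes> g"] len_less_iff_refl_parity[of r g]
    refl_parity_reflection_mult
  by (simp add: m_assoc[symmetric])

theorem strong_exchange:
  assumes "r \<in> T" and "set w \<subseteq> S" and "len (r \<otimes> word_prod G w) < len (word_prod G w)"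
  shows "\<exists>xs c ys. w = xs @ c # ys \<and> r \<otimes> word_prod G w = word_prod G (xs @ ys)"
proof -
  have "odd (refl_count G w r)"
    using assms len_less_iff_refl_parity refl_parity_word by simp
  then have "refl_count G w r > 0" by (rule odd_pos)
  moreover have "set w \<subseteq> carrier G" using assms generators_closed by auto
  ultimately show ?thesis using refl_count_pos_deletion assms by simp
qed

lemma len_right_mult_eq: "s \<in> S \<Longrightarrow> g \<in> carrier G \<Longrightarrow> len (g \<otimes> s) = len (s \<otimes> inv g)"
  using len_inv[of "g \<otimes> s"] by (simp add: inv_mult_group)

lemma right_descents_eq_left_descents_inv:
  "g \<in> carrier G \<Longrightarrow> right_descents G S g = left_descents G S (inv g)"
  unfolding right_descents_def left_descents_def by (auto simp: len_right_mult_eq)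

section \<open>Bruhat order and the lifting property\<close>

lemma bruhat_step_closed: "step x y \<Longrightarrow> x \<in> carrier G \<and> y \<in> carrier G"
  unfolding bruhat_step_def by auto

lemma bruhat_le_closed: "x \<preceq> y \<Longrightarrow> x \<in> carrier G \<and> y \<in> carrier G"
  unfolding bruhat_le_def
  by (auto elim: rtranclp_induct dest: bruhat_step_closed)

lemma bruhat_le_refl: "x \<in> carrier G \<Longrightarrow> x \<preceq> x"
  unfolding bruhat_le_def by simp

lemma bruhat_le_trans: "x \<preceq> y \<Longrightarrow> y \<preceq> z \<Longrightarrow> x \<preceq> z"
  unfolding bruhat_le_def by auto

lemma bruhat_step_le: "step x y \<Longrightarrow> x \<preceq> y"
  unfolding bruhat_le_def using bruhat_step_closed by auto

lemma bruhat_le_induct [consumes 1, case_names refl step trans]: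
  assumes "x \<preceq> y"
    and "\<And>x. x \<in> carrier G \<Longrightarrow> P x x"
    and "\<And>x y. step x y \<Longrightarrow> P x y"
    and "\<And>x y z. P x y \<Longrightarrow> P y z \<Longrightarrow> P x z"
  shows "P x y"
proof -
  have x: "x \<in> carrier G" and "step\<^sup>*\<^sup>* x y" using assms(1) unfolding bruhat_le_def by auto
  from this(2) show ?thesis
  proof (induction rule: rtranclp_induct)
    case base
    show ?case using assms(2) x .
  next
    case (step y z)
    then show ?case using assms(3,4) by blast
  qed
qed

lemma bruhat_step_left:
  assumes r: "r \<in> T" and g: "g \<in> carrier G" and less: "len g < len (r \<otimes> g)"
  shows "step g (r \<otimes> g)"
proof -
  have "inv g \<otimes> r \<otimes> g \<in> T" using reflection_conj[of r "inv g"] r g by simp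
  moreover have "r \<otimes> g = g \<otimes> (inv g \<otimes> r \<otimes> g)" using r g by (simp add: m_assoc)
  ultimately show ?thesis unfolding bruhat_step_def using g less by auto
qed

lemma bruhat_le_generator_mult:
  "s \<in> S \<Longrightarrow> g \<in> carrier G \<Longrightarrow> len g < len (s \<otimes> g) \<Longrightarrow> g \<preceq> s \<otimes> g"
  using bruhat_step_left generator_reflection bruhat_step_le by blast

lemma bruhat_step_inv:
  assumes "step x y"
  shows "step (inv x) (inv y)"
proof -
  obtain t where t: "t \<in> T" "y = x \<otimes> t" "len x < len y" and x: "x \<in> carrier G"
    using assms unfolding bruhat_step_def by auto
  have "inv y = t \<otimes> inv x" using t x by (simp add: inv_mult_group)
  moreover have "len (inv x) < len (inv y)" using t x by simp
  ultimately show ?thesis using bruhat_step_left[of t "inv x"] x t by simp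
qed

lemma bruhat_le_inv: "x \<preceq> y \<Longrightarrow> inv x \<preceq> inv y"
  by (induction rule: bruhat_le_induct)
    (auto intro: bruhat_le_refl bruhat_step_le bruhat_step_inv bruhat_le_trans)

lemma bruhat_step_left_mult:
  assumes step: "step x y" and s: "s \<in> S" and ne: "s \<otimes> x \<noteq> y"
  shows "step (s \<otimes> x) (s \<otimes> y)"
proof -
  obtain t where t: "t \<in> T" "y = x \<otimes> t" and less: "len x < len y" and x: "x \<in> carrier G"
    using step unfolding bruhat_step_def by auto
  have y: "y \<in> carrier G" using t x by simp
  have "len (s \<otimes> x) < len (s \<otimes> y)"
  proof (cases "len (s \<otimes> y) < len y")
    case True
    obtain b where b: "set b \<subseteq> S" "word_prod G b = s \<otimes> y" "length b = len (s \<otimes> y)"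
      using reduced_word[of "s \<otimes> y"] s y by auto
    have sb: "set (s # b) \<subseteq> S" "word_prod G (s # b) = y" using b s y by auto
    let ?r = "y \<otimes> t \<otimes> inv y"
    have r: "?r \<in> T" using reflection_conj t y by simp
    have "?r \<otimes> y = x" using t x by (simp add: m_assoc)
    \<comment> \<open>\<open>x\<close> arises from the word \<open>s b\<close> of \<open>y\<close> by deleting a letter, which is not the first one
        because \<open>s x \<noteq> y\<close>\<close>
    then obtain xs c ys where del: "s # b = xs @ c # ys" "x = word_prod G (xs @ ys)"
      using strong_exchange[OF r sb(1)] sb(2) less by auto
    show ?thesis
    proof (cases xs)
      case Nil
      then show ?thesis using del b s y ne by auto
    next
      case (Cons a xs')
      then have "s \<otimes> x = word_prod G (xs' @ ys)" "set (xs' @ ys) \<subseteq> S"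
        using del b s by auto
      then show ?thesis using len_word_le[of "xs' @ ys"] del Cons b by simp
    qed
  next
    case False
    then show ?thesis
      using len_less_reflection_mult_iff[OF generator_reflection[OF s] y]
        len_generator_mult_le[OF s x] less
      by linarith
  qed
  moreover have "s \<otimes> y = (s \<otimes> x) \<otimes> t" using s x t by (simp add: m_assoc)
  ultimately show ?thesis unfolding bruhat_step_def using s x t by auto
qed

definition left_min :: "'a \<Rightarrow> 'a \<Rightarrow> 'a" where
  "left_min s x = (if len (s \<otimes> x) < len x then s \<otimes> x else x)"

definition left_max :: "'a \<Rightarrow> 'a \<Rightarrow> 'a" where
  "left_max s x = (if len (s \<otimes> x) < len x then x else s \<otimes> x)"

lemma left_min_le:
  assumes "s \<in> S" "x \<in> carrier G"
  shows "left_min s x \<preceq> x" and "left_min s x \<preceq> s \<otimes> x"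
  using assms bruhat_le_generator_mult[of s x] bruhat_le_generator_mult[of s "s \<otimes> x"]
    len_less_reflection_mult_iff[OF generator_reflection]
  by (auto simp: left_min_def intro: bruhat_le_refl)

lemma left_max_ge:
  assumes "s \<in> S" "x \<in> carrier G"
  shows "x \<preceq> left_max s x" and "s \<otimes> x \<preceq> left_max s x"
  using assms bruhat_le_generator_mult[of s x] bruhat_le_generator_mult[of s "s \<otimes> x"]
    len_less_reflection_mult_iff[OF generator_reflection]
  by (auto simp: left_max_def intro: bruhat_le_refl)

lemma left_min_left_max_mono:
  assumes s: "s \<in> S" and "x \<preceq> y"
  shows "left_min s x \<preceq> left_min s y \<and> left_max s x \<preceq> left_max s y"
  using assms(2)
proof (induction rule: bruhat_le_induct)
  case (refl x)
  then show ?case using s by (auto simp: left_min_def left_max_def intro: bruhat_le_refl)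
next
  case (step x y)
  then have x: "x \<in> carrier G" and y: "y \<in> carrier G" using bruhat_step_closed by auto
  show ?case
  proof (cases "s \<otimes> x = y")
    case True
    moreover have "s \<otimes> y = x" using True s x by auto
    moreover have "len x < len y" using step unfolding bruhat_step_def by auto
    ultimately have "left_min s x = x \<and> left_min s y = x \<and> left_max s x = y \<and> left_max s y = y"
      unfolding left_min_def left_max_def by auto
    then show ?thesis using x y bruhat_le_refl by simp
  next
    case False
    then have "x \<preceq> y" "s \<otimes> x \<preceq> s \<otimes> y"
      using bruhat_step_le bruhat_step_left_mult step s by auto
    then have "left_min s x \<preceq> y" "left_min s x \<preceq> s \<otimes> y"
      and "x \<preceq> left_max s y" "s \<otimes> x \<preceq> left_max s y"
      using left_min_le[OF s x] left_max_ge[OF s y] bruhat_le_trans by meson+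
    then show ?thesis unfolding left_min_def[of s y] left_max_def[of s x] by simp
  qed
next
  case (trans x y z)
  then show ?case using bruhat_le_trans by blast
qed

theorem lifting_property:
  assumes "u \<preceq> w" and s: "s \<in> S"
    and "len (s \<otimes> w) < len w" and "\<not> len (s \<otimes> u) < len u"
  shows "s \<otimes> u \<preceq> w" and "u \<preceq> s \<otimes> w"
  using left_min_left_max_mono[OF s assms(1)] assms by (simp_all add: left_min_def left_max_def)

end

section \<open>Symmetries of Bruhat intervals\<close>

lemma gamma_automorphismI:
  fixes G (structure)
  assumes maps: "\<And>x. x \<in> bruhat_interval G S u v \<Longrightarrow> f x \<in> bruhat_interval G S u v"
    and involution: "\<And>x. x \<in> bruhat_interval G S u v \<Longrightarrow> f (f x) = x"
    and edges: "\<And>x y. x \<in> bruhat_interval G S u v \<Longrightarrow> y \<in> bruhat_interval G S u v \<Longrightarrow>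
      (\<exists>t\<in>reflections G S. f y = f x \<otimes> t) \<longleftrightarrow> (\<exists>t\<in>reflections G S. y = x \<otimes> t)"
  shows "gamma_automorphism G S u v f"
proof -
  have "bij_betw f (bruhat_interval G S u v) (bruhat_interval G S u v)"
    by (rule bij_betw_byWitness[where f' = f]) (use maps involution in auto)
  moreover have "f x \<noteq> f y \<longleftrightarrow> x \<noteq> y"
    if "x \<in> bruhat_interval G S u v" "y \<in> bruhat_interval G S u v" for x y
    using involution that by metis
  ultimately show ?thesis
    unfolding gamma_automorphism_def gamma_edge_def using maps edges by auto
qed

context coxeter
begin

lemma bruhat_interval_closed: "x \<in> bruhat_interval G S u v \<Longrightarrow> x \<in> carrier G"
  unfolding bruhat_interval_def using bruhat_le_closed by auto

lemma left_mult_mem_interval: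
  assumes x: "x \<in> bruhat_interval G S u v"
    and s: "s \<in> left_descents G S v - left_descents G S u"
  shows "s \<otimes> x \<in> bruhat_interval G S u v"
proof -
  have ux: "u \<preceq> x" and xv: "x \<preceq> v" using x unfolding bruhat_interval_def by auto
  have x_closed: "x \<in> carrier G" using bruhat_interval_closed[OF x] .
  have gen: "s \<in> S" and desc_v: "len (s \<otimes> v) < len v" and asc_u: "\<not> len (s \<otimes> u) < len u"
    using s unfolding left_descents_def by auto
  show ?thesis
  proof (cases "len (s \<otimes> x) < len x")
    case True
    then have "s \<otimes> x \<preceq> x" "u \<preceq> s \<otimes> x"
      using left_min_le(1)[OF gen x_closed] lifting_property(2)[OF ux gen _ asc_u]
      by (simp_all add: left_min_def)
    then show ?thesis using xv bruhat_le_trans unfolding bruhat_interval_def by blast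
  next
    case False
    then have "x \<preceq> s \<otimes> x" "s \<otimes> x \<preceq> v"
      using left_max_ge(1)[OF gen x_closed] lifting_property(1)[OF xv gen desc_v]
      by (simp_all add: left_max_def)
    then show ?thesis using ux bruhat_le_trans unfolding bruhat_interval_def by blast
  qed
qed

lemma inv_mem_interval:
  "x \<in> bruhat_interval G S u v \<Longrightarrow> inv x \<in> bruhat_interval G S (inv u) (inv v)"
  unfolding bruhat_interval_def by (auto intro: bruhat_le_inv)

lemma right_mult_mem_interval:
  assumes x: "x \<in> bruhat_interval G S u v"
    and s: "s \<in> right_descents G S v - right_descents G S u"
  shows "x \<otimes> s \<in> bruhat_interval G S u v"
proof -
  have closed: "u \<in> carrier G" "x \<in> carrier G" "v \<in> carrier G" "s \<in> S"
    using x s bruhat_le_closed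
    unfolding bruhat_interval_def right_descents_def by auto
  have "s \<in> left_descents G S (inv v) - left_descents G S (inv u)"
    using s closed by (simp add: right_descents_eq_left_descents_inv)
  then have "inv (s \<otimes> inv x) \<in> bruhat_interval G S (inv (inv u)) (inv (inv v))"
    using inv_mem_interval left_mult_mem_interval inv_mem_interval[OF x] by blast
  then show ?thesis using closed by (simp add: inv_mult_group)
qed

lemma left_mult_gamma_automorphism:
  assumes s: "s \<in> left_descents G S v - left_descents G S u"
  shows "gamma_automorphism G S u v (\<lambda>x. s \<otimes> x)"
proof (rule gamma_automorphismI)
  have gen: "s \<in> S" using s unfolding left_descents_def by auto
  fix x y
  assume x: "x \<in> bruhat_interval G S u v" and y: "y \<in> bruhat_interval G S u v"
  show "s \<otimes> x \<in> bruhat_interval G S u v" using left_mult_mem_interval[OF x s] .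
  show "s \<otimes> (s \<otimes> x) = x" using gen bruhat_interval_closed[OF x] by simp
  show "(\<exists>t\<in>T. s \<otimes> y = s \<otimes> x \<otimes> t) \<longleftrightarrow> (\<exists>t\<in>T. y = x \<otimes> t)"
    using gen bruhat_interval_closed[OF x] bruhat_interval_closed[OF y]
    by (auto simp: m_assoc)
qed

lemma right_mult_gamma_automorphism:
  assumes s: "s \<in> right_descents G S v - right_descents G S u"
  shows "gamma_automorphism G S u v (\<lambda>x. x \<otimes> s)"
proof (rule gamma_automorphismI)
  have gen: "s \<in> S" using s unfolding right_descents_def by auto
  have conj: "t \<in> T \<Longrightarrow> s \<otimes> t \<otimes> s \<in> T" for t
    using reflection_conj[of t s] gen by simp
  fix x y
  assume x: "x \<in> bruhat_interval G S u v" and y: "y \<in> bruhat_interval G S u v"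
  note closed = bruhat_interval_closed[OF x] bruhat_interval_closed[OF y]
  show "x \<otimes> s \<in> bruhat_interval G S u v" using right_mult_mem_interval[OF x s] .
  show "x \<otimes> s \<otimes> s = x" using gen closed by simp
  show "(\<exists>t\<in>T. y \<otimes> s = x \<otimes> s \<otimes> t) \<longleftrightarrow> (\<exists>t\<in>T. y = x \<otimes> t)"
  proof
    assume "\<exists>t\<in>T. y \<otimes> s = x \<otimes> s \<otimes> t"
    then obtain t where t: "t \<in> T" "y \<otimes> s = x \<otimes> s \<otimes> t" by blast
    then have "y = x \<otimes> (s \<otimes> t \<otimes> s)"
      using gen closed generator_cancel_right[of s y] by (simp add: m_assoc)
    then show "\<exists>t\<in>T. y = x \<otimes> t" using conj t(1) by blast
  next
    assume "\<exists>t\<in>T. y = x \<otimes> t"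
    then obtain t where t: "t \<in> T" "y = x \<otimes> t" by blast
    then have "y \<otimes> s = x \<otimes> s \<otimes> (s \<otimes> t \<otimes> s)"
      using gen closed by (simp add: m_assoc)
    then show "\<exists>t\<in>T. y \<otimes> s = x \<otimes> s \<otimes> t" using conj t(1) by blast
  qed
qed

end

theorem proposition3p2:
  assumes "coxeter_system G S"
    and "u \<in> carrier G" and "v \<in> carrier G"
    and "bruhat_le G S u v"
  shows "(s \<in> left_descents G S v - left_descents G S u \<longrightarrow>
            (\<lambda>x. s \<otimes>\<^bsub>G\<^esub> x) ` bruhat_interval G S u v \<subseteq> bruhat_interval G S u v \<and>
            gamma_automorphism G S u v (\<lambda>x. s \<otimes>\<^bsub>G\<^esub> x)) \<and>
         (s \<in> right_descents G S v - right_descents G S u \<longrightarrow>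
            (\<lambda>x. x \<otimes>\<^bsub>G\<^esub> s) ` bruhat_interval G S u v \<subseteq> bruhat_interval G S u v \<and>
            gamma_automorphism G S u v (\<lambda>x. x \<otimes>\<^bsub>G\<^esub> s))"
proof -
  interpret coxeter G S using assms(1) by (rule coxeter.intro)
  show ?thesis
    using left_mult_mem_interval left_mult_gamma_automorphism
      right_mult_mem_interval right_mult_gamma_automorphism
    by blast
qed

end
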